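(* Let $\mathcal{D}$ be a clocked basic action theory, $K\in\mathbb{N}$, and $\sigma_1,\sigma_2$ situations with $\sigma_1 \approx_{\mathcal{D}K} \sigma_2$. Let $\phi$ be a clocked formula uniform in $s$ whose maximal natural-number constant is $\leq K$. Then $\mathcal{D}\models\phi[\sigma_1]$ if and only if $\mathcal{D}\models\phi[\sigma_2]$.
   Context: Situation calculus setting: sorts action, situation, object and time (the real numbers); $S_0$ initial situation; $\mathit{do}(a,s)$ the successor situation; $\phi[\sigma]$ is $\phi$ with $s$ replaced by $\sigma$. Fluents are relation or function symbols with last argument a situation and other arguments objects; there are finitely many fluents, finitely many action types and a finite set $\mathcal{O}$ of object constants (with unique names and domain closure). A formula is uniform in $s$ if it mentions no situation term other than $s$ and does not mention $\mathit{Poss}$. A basic action theory (BAT) is $\mathcal{D} = \mathcal{D}_0 \cup \mathcal{D}_{poss} \cup \mathcal{D}_{ssa} \cup \mathcal{D}_{ca} \cup \mathcal{D}_{co} \cup \Sigma$: initial description (uniform in $S_0$, complete information), precondition axioms, successor state axioms, domain closure and unique name axioms for actions and objects, and foundational axioms. A clock comparison is a formula $f(\vec x,s)\bowtie v$ or $v\bowtie v'$ with $f$ a functional fluent, $v,v'\in\mathbb{N}$, $\bowtie\in\{<,\leq,=,\geq,>\}$. A formula is clocked if every atomic subformula mentioning a term of sort time is a clock comparison; time-independent if it mentions no term of sort time. A BAT is clocked if there is a distinguished action type $\mathit{wait}(t)$ (other action types have no time argument) and: every functional fluent takes values of sort time; $\mathcal{D}_0$ sets every functional fluent to $0$ at $S_0$;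 every functional fluent $f$ has successor state axiom $f(\vec o,\mathit{do}(a,s))=y \equiv \exists t\,(a=\mathit{wait}(t)\wedge y=f(\vec o,s)+t) \vee (\neg\exists t\, a=\mathit{wait}(t)) \wedge (\phi_f(\vec o,a,s)\wedge y=0 \vee \neg\phi_f(\vec o,a,s)\wedge y=f(\vec o,s))$ with $\phi_f$ time-independent and uniform in $s$; relational fluents have successor state axioms $R(\vec o,\mathit{do}(a,s))\equiv\phi_R(\vec o,a,s)$ with $\phi_R$ clocked and uniform in $s$; precondition axioms have clocked right-hand sides uniform in $s$; $\mathit{Poss}(\mathit{wait}(t),s)\equiv\top$. Functional fluents are called clocks; $\mathcal{C}$ is the set of ground situation-suppressed clock terms; the clock valuation $\nu_\sigma:\mathcal{C}\to\mathbb{R}_{\geq0}$ is given by $\nu_\sigma(\omega)=\tau$ iff $\mathcal{D}\models\omega[\sigma]=\tau$. Regions: for $u,v\in\mathbb{R}_{\geq0}$, $u\sim_K v$ iff either $u>K$ and $v>K$, or $u,v\leq K$ with $\lfloor u\rfloor=\lfloor v\rfloor$ and $\lceil u\rceil=\lceil v\rceil$. The fractional part is $\mathrm{fract}(v)=v-\lfloor v\rfloor$ if $v\leq K$ and $0$ if $v>K$. Situations satisfy $\sigma_1\approx_{\mathcal{D}K}\sigma_2$ iff (1) for every relational fluent $R$ and ground object tuple $\vec\rho$, $\mathcal{D}\models R(\vec\rho,\sigma_1)$ iff $\mathcal{D}\models R(\vec\rho,\sigma_2)$; and (2) for every $\omega\in\mathcal{C}$, $\nu_{\sigma_1}(\omega)\sim_K\nu_{\sigma_2}(\omega)$,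 and for all $\omega,\omega'\in\mathcal{C}$, $\mathrm{fract}(\nu_{\sigma_1}(\omega))\leq\mathrm{fract}(\nu_{\sigma_1}(\omega'))$ iff $\mathrm{fract}(\nu_{\sigma_2}(\omega))\leq\mathrm{fract}(\nu_{\sigma_2}(\omega'))$. *)

theory Defs
  imports Main "HOL.Real"
begin

datatype ('o,'a) action = Wait real | Act 'a "'o list"

datatype 'o oterm = OVar nat | OConst 'o

datatype ('o,'a) aterm = AVar nat | ACons 'a "'o oterm list"

datatype cmp = Lt | Le | Eq | Ge | Gt

text \<open>Formulas uniform in s and clocked: the only atoms mentioning terms of sort
  time are clock comparisons f(x,s) \<bowtie> v and v \<bowtie> v' with v,v' natural numbers.
  Time variables can be quantified (ExT) but, by clockedness, cannot occur in atoms.\<close>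
datatype ('o,'r,'f,'a) fml =
    TT
  | Rel 'r "'o oterm list"
  | Clk 'f "'o oterm list" cmp nat
  | NCmp cmp nat nat
  | OEq "'o oterm" "'o oterm"
  | AEq "('o,'a) aterm" "('o,'a) aterm"
  | Neg "('o,'r,'f,'a) fml"
  | Conj "('o,'r,'f,'a) fml" "('o,'r,'f,'a) fml"
  | ExO nat "('o,'r,'f,'a) fml"
  | ExA nat "('o,'r,'f,'a) fml"
  | ExT "('o,'r,'f,'a) fml"

fun fvO :: "('o,'r,'f,'a) fml \<Rightarrow> nat set" where
  "fvO TT = {}"
| "fvO (Rel R ts) = {x. OVar x \<in> set ts}"
| "fvO (Clk f ts c v) = {x. OVar x \<in> set ts}"
| "fvO (NCmp c v w) = {}"
| "fvO (OEq t u) = {x. OVar x = t \<or> OVar x = u}"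
| "fvO (AEq p q) = {x. \<exists>A ts. (p = ACons A ts \<or> q = ACons A ts) \<and> OVar x \<in> set ts}"
| "fvO (Neg \<phi>) = fvO \<phi>"
| "fvO (Conj \<phi> \<psi>) = fvO \<phi> \<union> fvO \<psi>"
| "fvO (ExO x \<phi>) = fvO \<phi> - {x}"
| "fvO (ExA x \<phi>) = fvO \<phi>"
| "fvO (ExT \<phi>) = fvO \<phi>"

fun fvA :: "('o,'r,'f,'a) fml \<Rightarrow> nat set" where
  "fvA (AEq p q) = {x. AVar x = p \<or> AVar x = q}"
| "fvA (Neg \<phi>) = fvA \<phi>"
| "fvA (Conj \<phi> \<psi>) = fvA \<phi> \<union> fvA \<psi>"
| "fvA (ExO x \<phi>) = fvA \<phi>"
| "fvA (ExA x \<phi>) = fvA \<phi> - {x}"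
| "fvA (ExT \<phi>) = fvA \<phi>"
| "fvA _ = {}"

fun time_indep :: "('o,'r,'f,'a) fml \<Rightarrow> bool" where
  "time_indep (Clk f ts c v) = False"
| "time_indep (NCmp c v w) = False"
| "time_indep (ExT \<phi>) = False"
| "time_indep (Neg \<phi>) = time_indep \<phi>"
| "time_indep (Conj \<phi> \<psi>) = (time_indep \<phi> \<and> time_indep \<psi>)"
| "time_indep (ExO x \<phi>) = time_indep \<phi>"
| "time_indep (ExA x \<phi>) = time_indep \<phi>"
| "time_indep _ = True"

fun max_const :: "('o,'r,'f,'a) fml \<Rightarrow> nat" where
  "max_const (Clk f ts c v) = v"
| "max_const (NCmp c v w) = max v w"
| "max_const (Neg \<phi>) = max_const \<phi>"
| "max_const (Conj \<phi> \<psi>) = max (max_const \<phi>) (max_const \<psi>)"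
| "max_const (ExO x \<phi>) = max_const \<phi>"
| "max_const (ExA x \<phi>) = max_const \<phi>"
| "max_const (ExT \<phi>) = max_const \<phi>"
| "max_const _ = 0"

text \<open>A clocked BAT is determined by: arities of relational fluents, clocks and
  (non-wait) action types; the complete initial description of relational fluents
  (clocks are 0 initially); the right-hand sides \<phi>_R(x,a,s) of the relational SSAs
  (object variables 0..n-1 stand for x, action variable 0 for a); the reset
  conditions \<phi>_f(x,a,s) of the clock SSAs; and the precondition formulas.
  The fixed shape of the clock SSAs and Poss(wait(t),s) = True are built into
  the semantics below.\<close>
record ('o,'r,'f,'a) cbat =
  rarity :: "'r \<Rightarrow> nat"
  farity :: "'f \<Rightarrow> nat"
  aarity :: "'a \<Rightarrow> nat"
  init_rel :: "'r \<Rightarrow> 'o list \<Rightarrow> bool"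
  ssa_rel :: "'r \<Rightarrow> ('o,'r,'f,'a) fml"
  reset_cond :: "'f \<Rightarrow> ('o,'r,'f,'a) fml"
  poss_cond :: "'a \<Rightarrow> ('o,'r,'f,'a) fml"

fun wf_aterm :: "('a \<Rightarrow> nat) \<Rightarrow> ('o,'a) aterm \<Rightarrow> bool" where
  "wf_aterm ar (AVar x) = True"
| "wf_aterm ar (ACons A ts) = (length ts = ar A)"

fun wf_fml :: "('o,'r,'f,'a,'z) cbat_scheme \<Rightarrow> ('o,'r,'f,'a) fml \<Rightarrow> bool" where
  "wf_fml D (Rel R ts) = (length ts = rarity D R)"
| "wf_fml D (Clk f ts c v) = (length ts = farity D f)"
| "wf_fml D (AEq p q) = (wf_aterm (aarity D) p \<and> wf_aterm (aarity D) q)"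
| "wf_fml D (Neg \<phi>) = wf_fml D \<phi>"
| "wf_fml D (Conj \<phi> \<psi>) = (wf_fml D \<phi> \<and> wf_fml D \<psi>)"
| "wf_fml D (ExO x \<phi>) = wf_fml D \<phi>"
| "wf_fml D (ExA x \<phi>) = wf_fml D \<phi>"
| "wf_fml D (ExT \<phi>) = wf_fml D \<phi>"
| "wf_fml D _ = True"

definition clocked_bat :: "('o,'r,'f,'a,'z) cbat_scheme \<Rightarrow> bool" where
  "clocked_bat D \<longleftrightarrow>
     (\<forall>R. wf_fml D (ssa_rel D R) \<and> fvO (ssa_rel D R) \<subseteq> {..<rarity D R}
          \<and> fvA (ssa_rel D R) \<subseteq> {0}) \<and>
     (\<forall>f. wf_fml D (reset_cond D f) \<and> time_indep (reset_cond D f)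
          \<and> fvO (reset_cond D f) \<subseteq> {..<farity D f} \<and> fvA (reset_cond D f) \<subseteq> {0}) \<and>
     (\<forall>A. wf_fml D (poss_cond D A) \<and> fvO (poss_cond D A) \<subseteq> {..<aarity D A}
          \<and> fvA (poss_cond D A) = {})"

definition wf_action :: "('a \<Rightarrow> nat) \<Rightarrow> ('o,'a) action \<Rightarrow> bool" where
  "wf_action ar a = (case a of Wait t \<Rightarrow> True | Act A os \<Rightarrow> length os = ar A)"

fun cmp_sem :: "cmp \<Rightarrow> real \<Rightarrow> real \<Rightarrow> bool" where
  "cmp_sem Lt x y = (x < y)"
| "cmp_sem Le x y = (x \<le> y)"
| "cmp_sem Eq x y = (x = y)"
| "cmp_sem Ge x y = (x \<ge> y)"
| "cmp_sem Gt x y = (x > y)"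

fun oval :: "(nat \<Rightarrow> 'o) \<Rightarrow> 'o oterm \<Rightarrow> 'o" where
  "oval oe (OVar x) = oe x"
| "oval oe (OConst c) = c"

fun aval :: "(nat \<Rightarrow> 'o) \<Rightarrow> (nat \<Rightarrow> ('o,'a) action) \<Rightarrow> ('o,'a) aterm \<Rightarrow> ('o,'a) action" where
  "aval oe ae (AVar x) = ae x"
| "aval oe ae (ACons A ts) = Act A (map (oval oe) ts)"

text \<open>Action quantifiers range over all ground actions (domain closure for actions),
  object quantifiers over all objects (domain closure for objects).\<close>
fun eval :: "('a \<Rightarrow> nat) \<Rightarrow> ('r \<Rightarrow> 'o list \<Rightarrow> bool) \<Rightarrow> ('f \<Rightarrow> 'o list \<Rightarrow> real)
    \<Rightarrow> (nat \<Rightarrow> 'o) \<Rightarrow> (nat \<Rightarrow> ('o,'a) action) \<Rightarrow> ('o,'r,'f,'a) fml \<Rightarrow> bool" where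
  "eval ar rv cv oe ae TT = True"
| "eval ar rv cv oe ae (Rel R ts) = rv R (map (oval oe) ts)"
| "eval ar rv cv oe ae (Clk f ts c v) = cmp_sem c (cv f (map (oval oe) ts)) (real v)"
| "eval ar rv cv oe ae (NCmp c v w) = cmp_sem c (real v) (real w)"
| "eval ar rv cv oe ae (OEq t u) = (oval oe t = oval oe u)"
| "eval ar rv cv oe ae (AEq p q) = (aval oe ae p = aval oe ae q)"
| "eval ar rv cv oe ae (Neg \<phi>) = (\<not> eval ar rv cv oe ae \<phi>)"
| "eval ar rv cv oe ae (Conj \<phi> \<psi>) = (eval ar rv cv oe ae \<phi> \<and> eval ar rv cv oe ae \<psi>)"
| "eval ar rv cv oe ae (ExO x \<phi>) = (\<exists>b. eval ar rv cv (oe(x := b)) ae \<phi>)"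
| "eval ar rv cv oe ae (ExA x \<phi>) = (\<exists>a. wf_action ar a \<and> eval ar rv cv oe (ae(x := a)) \<phi>)"
| "eval ar rv cv oe ae (ExT \<phi>) = (\<exists>t::real. eval ar rv cv oe ae \<phi>)"

text \<open>Ground situations: S0 = [], do(a,s) = a # s (most recent action first).
  The state (fluent values) at a situation, as fixed by D0 and the SSAs.\<close>
fun state :: "('o,'r,'f,'a,'z) cbat_scheme \<Rightarrow> ('o,'a) action list
    \<Rightarrow> ('r \<Rightarrow> 'o list \<Rightarrow> bool) \<times> ('f \<Rightarrow> 'o list \<Rightarrow> real)" where
  "state D [] = (init_rel D, (\<lambda>f os. 0))"
| "state D (a # s) =
     (let (rv, cv) = state D s;
          ae = (\<lambda>i. a)
      in (\<lambda>R os. eval (aarity D) rv cv (\<lambda>i. os ! i) ae (ssa_rel D R),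
          \<lambda>f os. (case a of
                     Wait t \<Rightarrow> cv f os + t
                   | Act A args \<Rightarrow>
                       (if eval (aarity D) rv cv (\<lambda>i. os ! i) ae (reset_cond D f)
                        then 0 else cv f os))))"

definition rel_val :: "('o,'r,'f,'a,'z) cbat_scheme \<Rightarrow> ('o,'a) action list \<Rightarrow> 'r \<Rightarrow> 'o list \<Rightarrow> bool" where
  "rel_val D \<sigma> = fst (state D \<sigma>)"

definition clock_val :: "('o,'r,'f,'a,'z) cbat_scheme \<Rightarrow> ('o,'a) action list \<Rightarrow> 'f \<Rightarrow> 'o list \<Rightarrow> real" where
  "clock_val D \<sigma> = snd (state D \<sigma>)"

definition is_sit :: "('o,'r,'f,'a,'z) cbat_scheme \<Rightarrow> ('o,'a) action list \<Rightarrow> bool" where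
  "is_sit D \<sigma> \<longleftrightarrow> (\<forall>a \<in> set \<sigma>. wf_action (aarity D) a)"

text \<open>D \<Turnstile> \<phi>[\<sigma>] (universal closure over free variables).\<close>
definition entails :: "('o,'r,'f,'a,'z) cbat_scheme \<Rightarrow> ('o,'r,'f,'a) fml \<Rightarrow> ('o,'a) action list \<Rightarrow> bool" where
  "entails D \<phi> \<sigma> \<longleftrightarrow>
     (\<forall>oe ae. (\<forall>i. wf_action (aarity D) (ae i)) \<longrightarrow>
        eval (aarity D) (rel_val D \<sigma>) (clock_val D \<sigma>) oe ae \<phi>)"

definition region_sim :: "nat \<Rightarrow> real \<Rightarrow> real \<Rightarrow> bool" where
  "region_sim K u v \<longleftrightarrow>
     (u > real K \<and> v > real K) \<or>
     (u \<le> real K \<and> v \<le> real K \<and> \<lfloor>u\<rfloor> = \<lfloor>v\<rfloor> \<and> \<lceil>u\<rceil> = \<lceil>v\<rceil>)"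

definition fractK :: "nat \<Rightarrow> real \<Rightarrow> real" where
  "fractK K v = (if v \<le> real K then v - of_int \<lfloor>v\<rfloor> else 0)"

definition sit_equiv :: "('o,'r,'f,'a,'z) cbat_scheme \<Rightarrow> nat \<Rightarrow> ('o,'a) action list \<Rightarrow> ('o,'a) action list \<Rightarrow> bool" where
  "sit_equiv D K \<sigma>1 \<sigma>2 \<longleftrightarrow>
     (\<forall>R os. length os = rarity D R \<longrightarrow> (rel_val D \<sigma>1 R os \<longleftrightarrow> rel_val D \<sigma>2 R os)) \<and>
     (\<forall>f os. length os = farity D f \<longrightarrow>
        region_sim K (clock_val D \<sigma>1 f os) (clock_val D \<sigma>2 f os)) \<and>
     (\<forall>f os g ps. length os = farity D f \<longrightarrow> length ps = farity D g \<longrightarrow>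
        (fractK K (clock_val D \<sigma>1 f os) \<le> fractK K (clock_val D \<sigma>1 g ps) \<longleftrightarrow>
         fractK K (clock_val D \<sigma>2 f os) \<le> fractK K (clock_val D \<sigma>2 g ps)))"

end

theory Submission
  imports Defs
begin

text \<open>A clocked formula meets clock values only through comparisons with natural constants
  \<open>v \<le> K\<close>. Such a comparison is decided by the \<open>K\<close>-region of the value: above \<open>K\<close> every
  comparison comes out the same, and at most \<open>K\<close> the floor and ceiling decide it. So the
  truth of the formula depends only on the relational fluents and the regions of the clocks,
  which \<open>\<approx>\<^sub>D\<^sub>K\<close> preserves.\<close>

lemma cmp_sem_of_int_cong_floor_ceiling:
  fixes u w :: real
  assumes "\<lfloor>u\<rfloor> = \<lfloor>w\<rfloor>" and "\<lceil>u\<rceil> = \<lceil>w\<rceil>"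
  shows "cmp_sem c u (of_int n) = cmp_sem c w (of_int n)"
proof -
  have less: "x < of_int n \<longleftrightarrow> \<lfloor>x\<rfloor> < n" for x :: real
    by (simp add: floor_less_iff)
  have le: "x \<le> of_int n \<longleftrightarrow> \<lceil>x\<rceil> \<le> n" for x :: real
    by (simp add: ceiling_le_iff)
  have eq: "x = of_int n \<longleftrightarrow> \<lfloor>x\<rfloor> = n \<and> \<lceil>x\<rceil> = n" for x :: real
    using less le by (smt (verit) floor_of_int ceiling_of_int)
  show ?thesis
    using less[of u] less[of w] le[of u] le[of w] eq[of u] eq[of w] assms
    by (cases c) auto
qed

lemma cmp_sem_nat_cong_region_sim:
  assumes "region_sim K u w" and "v \<le> K"
  shows "cmp_sem c u (real v) = cmp_sem c w (real v)"
proof (cases "u \<le> real K")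
  case True
  then have "\<lfloor>u\<rfloor> = \<lfloor>w\<rfloor>" "\<lceil>u\<rceil> = \<lceil>w\<rceil>"
    using \<open>region_sim K u w\<close> by (auto simp: region_sim_def)
  then show ?thesis
    using cmp_sem_of_int_cong_floor_ceiling[of u w c "int v"] by simp
next
  case False
  then have "real v < u" "real v < w"
    using assms by (auto simp: region_sim_def)
  then show ?thesis
    by (cases c) auto
qed

lemma eval_cong_region_sim:
  assumes rel: "\<And>R os. length os = rarity D R \<Longrightarrow> rv1 R os = rv2 R os"
    and clk: "\<And>f os. length os = farity D f \<Longrightarrow> region_sim K (cv1 f os) (cv2 f os)"
    and "wf_fml D \<phi>" and "max_const \<phi> \<le> K"
  shows "eval ar rv1 cv1 oe ae \<phi> = eval ar rv2 cv2 oe ae \<phi>"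
  using assms(3,4)
proof (induction \<phi> arbitrary: oe ae)
  case (Rel R ts)
  then show ?case by (simp add: rel)
next
  case (Clk f ts c v)
  then show ?case by (simp add: cmp_sem_nat_cong_region_sim[OF clk])
qed auto

theorem lemma2:
  fixes D :: "('o::finite, 'r::finite, 'f::finite, 'a::finite) cbat"
    and K :: nat
    and \<sigma>1 \<sigma>2 :: "('o, 'a) action list"
    and \<phi> :: "('o, 'r, 'f, 'a) fml"
  assumes "clocked_bat D"
    and "is_sit D \<sigma>1" and "is_sit D \<sigma>2"
    and "sit_equiv D K \<sigma>1 \<sigma>2"
    and "wf_fml D \<phi>"
    and "max_const \<phi> \<le> K"
  shows "entails D \<phi> \<sigma>1 \<longleftrightarrow> entails D \<phi> \<sigma>2"
proof -
  have "eval (aarity D) (rel_val D \<sigma>1) (clock_val D \<sigma>1) oe ae \<phi> =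
        eval (aarity D) (rel_val D \<sigma>2) (clock_val D \<sigma>2) oe ae \<phi>" for oe ae
    using \<open>sit_equiv D K \<sigma>1 \<sigma>2\<close> \<open>wf_fml D \<phi>\<close> \<open>max_const \<phi> \<le> K\<close>
    by (intro eval_cong_region_sim[where D = D and K = K]) (auto simp: sit_equiv_def)
  then show ?thesis
    unfolding entails_def by simp
qed

end
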